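(* Let $K\subseteq\mathbb{R}^{n}$ be compact and let $T\subseteq\mathbb{R}^{n}$ be compact with non-empty interior. Then \[ M^{*}(K,T)\le N^{*}(K,-T)\quad\text{and}\quad\overline{M}_{\omega}(K,T)\le\overline{N}_{\omega}(K,-T). \] In particular, $M_{\omega}(K,T)\le N_{\omega}(K,-T)$.
   Context: $\mathbbm{1}_A$ is the indicator of $A$. $\mathcal{D}_{+}^{n}$ is the set of non-negative finite discrete measures on $\mathbb{R}^n$ (finite sums $\sum_i\omega_i\delta_{x_i}$, $\omega_i\ge0$) and $\mathcal{B}_{+}^{n}$ the non-negative regular Borel measures on $\mathbb{R}^n$; $(\nu*\mathbbm{1}_T)(x)=\int\mathbbm{1}_T(x-y)\,d\nu(y)$. Definitions: $N_\omega(K,T)=\inf\{\nu(\mathbb{R}^n):\nu\in\mathcal{D}_+^n,\ \nu*\mathbbm{1}_T\ge\mathbbm{1}_K\}$; $\overline{N}_\omega(K,T)=\inf\{\nu(\mathbb{R}^n):\nu\in\mathcal{D}_+^n,\ \mathrm{supp}(\nu)\subseteq K,\ \nu*\mathbbm{1}_T\ge\mathbbm{1}_K\}$; $N^{*}(K,T)=\inf\{\mu(\mathbb{R}^n):\mu\in\mathcal{B}_+^n,\ \mu*\mathbbm{1}_T\ge\mathbbm{1}_K\}$; $M_\omega(K,T)=\sup\{\nu(K):\nu\in\mathcal{D}_+^n,\ \nu*\mathbbm{1}_T\le1\text{ on }\mathbb{R}^n\}$; $\overline{M}_\omega(K,T)=\sup\{\nu(K):\nu\in\mathcal{D}_+^n,\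 (\nu*\mathbbm{1}_T)(x)\le1\ \forall x\in K\}$; $M^{*}(K,T)=\sup\{\mu(K):\mu\in\mathcal{B}_+^n,\ \mu*\mathbbm{1}_T\le1\text{ on }\mathbb{R}^n\}$. *)

theory Defs
  imports "HOL-Analysis.Analysis"
begin

text \<open>Non-negative finite discrete measures on the Euclidean space, represented by a
  weight function with finite support: nu = sum over x with w x \<noteq> 0 of w x * delta_x.\<close>

definition disc_meas :: "('a \<Rightarrow> real) \<Rightarrow> bool" where
  "disc_meas w \<longleftrightarrow> (\<forall>x. 0 \<le> w x) \<and> finite {x. w x \<noteq> 0}"

definition dsupp :: "('a \<Rightarrow> real) \<Rightarrow> 'a set" where
  "dsupp w = {x. w x \<noteq> 0}"

definition dmass :: "('a \<Rightarrow> real) \<Rightarrow> 'a set \<Rightarrow> real" where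
  "dmass w A = (\<Sum>x\<in>dsupp w \<inter> A. w x)"

definition dconv :: "('a::ab_group_add \<Rightarrow> real) \<Rightarrow> 'a set \<Rightarrow> 'a \<Rightarrow> real" where
  "dconv w T x = (\<Sum>y\<in>dsupp w. w y * indicator T (x - y))"

definition mconv :: "'a::ab_group_add measure \<Rightarrow> 'a set \<Rightarrow> 'a \<Rightarrow> ennreal" where
  "mconv M T x = (\<integral>\<^sup>+ y. indicator T (x - y) \<partial>M)"

definition regular_borel :: "'a::topological_space measure \<Rightarrow> bool" where
  "regular_borel M \<longleftrightarrow> sets M = sets borel \<and>
     (\<forall>B\<in>sets borel.
        emeasure M B = (INF U\<in>{U. open U \<and> B \<subseteq> U}. emeasure M U) \<and>
        emeasure M B = (SUP C\<in>{C. compact C \<and> C \<subseteq> B}. emeasure M C))"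

definition N_omega :: "'a::ab_group_add set \<Rightarrow> 'a set \<Rightarrow> ennreal" where
  "N_omega K T = Inf {ennreal (dmass w UNIV) | w. disc_meas w \<and> (\<forall>x. dconv w T x \<ge> indicator K x)}"

definition N_omega_bar :: "'a::ab_group_add set \<Rightarrow> 'a set \<Rightarrow> ennreal" where
  "N_omega_bar K T = Inf {ennreal (dmass w UNIV) | w. disc_meas w \<and> dsupp w \<subseteq> K \<and>
      (\<forall>x. dconv w T x \<ge> indicator K x)}"

definition N_star :: "'a::{ab_group_add,topological_space} set \<Rightarrow> 'a set \<Rightarrow> ennreal" where
  "N_star K T = Inf {emeasure M UNIV | M. regular_borel M \<and> (\<forall>x. mconv M T x \<ge> indicator K x)}"

definition M_omega :: "'a::ab_group_add set \<Rightarrow> 'a set \<Rightarrow> ennreal" where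
  "M_omega K T = Sup {ennreal (dmass w K) | w. disc_meas w \<and> (\<forall>x. dconv w T x \<le> 1)}"

definition M_omega_bar :: "'a::ab_group_add set \<Rightarrow> 'a set \<Rightarrow> ennreal" where
  "M_omega_bar K T = Sup {ennreal (dmass w K) | w. disc_meas w \<and> (\<forall>x\<in>K. dconv w T x \<le> 1)}"

definition M_star :: "'a::{ab_group_add,topological_space} set \<Rightarrow> 'a set \<Rightarrow> ennreal" where
  "M_star K T = Sup {emeasure M K | M. regular_borel M \<and> (\<forall>x. mconv M T x \<le> 1)}"

end

theory Submission
  imports Defs
begin

text \<open>If \<open>\<mu> * 1\<^sub>T \<le> 1\<close> (a packing) and \<open>\<nu> * 1\<^bsub>-T\<^esub> \<ge> 1\<^sub>K\<close> (a covering), then,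
  since \<open>1\<^bsub>-T\<^esub>(x - y) = 1\<^sub>T(y - x)\<close>, exchanging the order of integration gives
  \<open>\<mu>(K) \<le> \<integral>\<^sub>K (\<nu> * 1\<^bsub>-T\<^esub>) d\<mu> \<le> \<integral>\<integral> 1\<^sub>T(y - x) d\<mu>(x) d\<nu>(y) = \<integral> (\<mu> * 1\<^sub>T) d\<nu> \<le> \<nu>(\<real>\<^sup>n)\<close>.
  The packing bound is only used on the support of \<open>\<nu>\<close>, which is why it may be restricted
  to \<open>K\<close> when \<open>\<nu>\<close> lives on \<open>K\<close>. For Borel measures, Fubini needs \<open>\<mu>(K) < \<infinity>\<close>: it holds
  because \<open>T\<close> contains a ball, so each of finitely many balls covering \<open>K\<close> has \<open>\<mu>\<close>-measure
  at most one.\<close>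

lemma indicator_uminus_image_diff:
  "indicator (uminus ` T) (x - y) = (indicator T (y - x) :: 'b::zero_neq_one)"
  for x y :: "'a::ab_group_add"
proof -
  have "x - y \<in> uminus ` T \<longleftrightarrow> y - x \<in> T"
    by (auto simp: image_iff algebra_simps intro!: bexI[of _ "y - x"])
  then show ?thesis by (simp add: indicator_def)
qed

lemma sum_dconv_uminus_swap:
  fixes mu nu :: "'a::ab_group_add \<Rightarrow> real"
  shows "(\<Sum>x\<in>dsupp mu. mu x * dconv nu (uminus ` T) x) = (\<Sum>y\<in>dsupp nu. nu y * dconv mu T y)"
  by (simp add: dconv_def sum_distrib_left indicator_uminus_image_diff mult_ac sum.swap[of _ "dsupp mu"])

lemma dconv_nonneg: "disc_meas w \<Longrightarrow> 0 \<le> dconv w T x"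
  by (auto simp: disc_meas_def dconv_def intro!: sum_nonneg)

lemma dmass_packing_le_dmass_covering:
  fixes mu nu :: "'a::ab_group_add \<Rightarrow> real"
  assumes mu: "disc_meas mu" and nu: "disc_meas nu"
    and packing: "\<forall>x\<in>A. dconv mu T x \<le> 1" and "dsupp nu \<subseteq> A"
    and covering: "\<forall>x. indicator K x \<le> dconv nu (uminus ` T) x"
  shows "dmass mu K \<le> dmass nu UNIV"
proof -
  have fin: "finite (dsupp mu)"
    using mu by (simp add: disc_meas_def dsupp_def)
  have nonneg: "\<And>x. 0 \<le> mu x" "\<And>x. 0 \<le> nu x"
    using mu nu by (auto simp: disc_meas_def)
  have "dmass mu K \<le> (\<Sum>x\<in>dsupp mu \<inter> K. mu x * dconv nu (uminus ` T) x)"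
    unfolding dmass_def
  proof (rule sum_mono)
    fix x assume "x \<in> dsupp mu \<inter> K"
    then have "1 \<le> dconv nu (uminus ` T) x" using covering by (metis IntD2 indicator_simps(1))
    then show "mu x \<le> mu x * dconv nu (uminus ` T) x"
      using nonneg(1)[of x] by (simp add: mult_le_cancel_left1)
  qed
  also have "\<dots> \<le> (\<Sum>x\<in>dsupp mu. mu x * dconv nu (uminus ` T) x)"
    using fin nonneg dconv_nonneg[OF nu] by (intro sum_mono2) auto
  also have "\<dots> = (\<Sum>y\<in>dsupp nu. nu y * dconv mu T y)"
    by (rule sum_dconv_uminus_swap)
  also have "\<dots> \<le> (\<Sum>y\<in>dsupp nu. nu y)"
    using packing \<open>dsupp nu \<subseteq> A\<close> nonneg(2) by (intro sum_mono) (auto simp: mult_left_le)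
  also have "\<dots> = dmass nu UNIV"
    by (simp add: dmass_def)
  finally show ?thesis .
qed

lemma mconv_eq_emeasure:
  fixes mu :: "'a::euclidean_space measure"
  assumes "sets mu = sets borel" and "T \<in> sets borel"
  shows "mconv mu T x = emeasure mu {y. x - y \<in> T}"
proof -
  have "{y. x - y \<in> T} \<in> sets mu"
    using assms by simp measurable
  moreover have "mconv mu T x = (\<integral>\<^sup>+ y. indicator {y. x - y \<in> T} y \<partial>mu)"
    unfolding mconv_def by (rule nn_integral_cong) (simp add: indicator_def)
  ultimately show ?thesis by simp
qed

lemma emeasure_compact_lt_top_if_mconv_le_1:
  fixes mu :: "'a::euclidean_space measure"
  assumes sets_mu: "sets mu = sets borel" and "compact K"
    and T: "T \<in> sets borel" "interior T \<noteq> {}"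
    and packing: "\<forall>x. mconv mu T x \<le> 1"
  shows "emeasure mu K < \<infinity>"
proof -
  obtain c r where "r > 0" and ball_T: "ball c r \<subseteq> T"
    using T(2) by (meson ex_in_conv open_contains_ball open_interior interior_subset order_trans)
  define B where "B z = {y. (z + c) - y \<in> T}" for z
  have ball_B: "ball z r \<subseteq> B z" for z
  proof
    fix v assume "v \<in> ball z r"
    then have "(z + c) - v \<in> ball c r" by (simp add: dist_norm norm_minus_commute algebra_simps)
    then show "v \<in> B z" using ball_T by (auto simp: B_def)
  qed
  have B_sets: "B z \<in> sets mu" for z
    using sets_mu T(1) unfolding B_def by simp measurable
  obtain F where F: "finite F" "K \<subseteq> (\<Union>z\<in>F. ball z r)"
    using compactE_image[OF \<open>compact K\<close>, of K "\<lambda>z. ball z r"] \<open>r > 0\<close>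
    by (metis centre_in_ball UN_I open_ball subsetI)
  then have "emeasure mu K \<le> emeasure mu (\<Union>z\<in>F. B z)"
    using ball_B B_sets by (intro emeasure_mono) fastforce+
  also have "\<dots> \<le> (\<Sum>z\<in>F. emeasure mu (B z))"
    using F B_sets by (intro emeasure_subadditive_finite) auto
  also have "\<dots> \<le> (\<Sum>z\<in>F. 1)"
    using packing mconv_eq_emeasure[OF sets_mu T(1)] by (intro sum_mono) (simp add: B_def)
  also have "\<dots> < \<infinity>"
    by (simp add: of_nat_less_top)
  finally show ?thesis .
qed

lemma borel_measurable_mconv:
  fixes M :: "'a::euclidean_space measure"
  assumes "sigma_finite_measure M" and "sets M = sets borel" and "sets N = sets borel"
    and "T \<in> sets borel"
  shows "mconv M T \<in> borel_measurable N"
proof -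
  interpret M: sigma_finite_measure M by fact
  have "(\<lambda>(x, y). indicator T (x - y) :: ennreal) \<in> borel_measurable (N \<Otimes>\<^sub>M M)"
    using assms by (simp add: measurable_cong_sets[OF sets_pair_measure_cong[OF assms(3,2)] refl]
        borel_prod[symmetric]) measurable
  then show ?thesis
    unfolding mconv_def by (rule M.borel_measurable_nn_integral)
qed

lemma nn_integral_mconv_uminus_swap:
  fixes mu M :: "'a::euclidean_space measure"
  assumes "sigma_finite_measure mu" and "sigma_finite_measure M"
    and "sets mu = sets borel" and "sets M = sets borel" and "T \<in> sets borel"
  shows "(\<integral>\<^sup>+ x. mconv M (uminus ` T) x \<partial>mu) = (\<integral>\<^sup>+ y. mconv mu T y \<partial>M)"
proof -
  interpret pair_sigma_finite mu M
    using assms(1,2) by (simp add: pair_sigma_finite_def)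
  have "(\<lambda>(x, y). indicator T (y - x) :: ennreal) \<in> borel_measurable (mu \<Otimes>\<^sub>M M)"
    using assms by (simp add: measurable_cong_sets[OF sets_pair_measure_cong[OF assms(3,4)] refl]
        borel_prod[symmetric]) measurable
  then show ?thesis
    by (simp add: mconv_def indicator_uminus_image_diff Fubini')
qed

lemma emeasure_packing_le_emeasure_covering:
  fixes mu M :: "'a::euclidean_space measure"
  assumes sets_mu: "sets mu = sets borel" and sets_M: "sets M = sets borel"
    and "compact K" and T: "T \<in> sets borel" "interior T \<noteq> {}"
    and packing: "\<forall>x. mconv mu T x \<le> 1"
    and covering: "\<forall>x. indicator K x \<le> mconv M (uminus ` T) x"
  shows "emeasure mu K \<le> emeasure M UNIV"
proof (cases "emeasure M UNIV = \<infinity>")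
  case False
  have space_M: "space M = UNIV"
    using sets_eq_imp_space_eq[OF sets_M] by simp
  have K_sets: "K \<in> sets mu"
    using sets_mu \<open>compact K\<close> by (simp add: borel_compact)
  then have ind_K: "indicator K \<in> borel_measurable mu"
    by simp
  have "uminus ` T = uminus -` T"
    by (force simp: image_iff)
  then have uminus_T: "uminus ` T \<in> sets borel"
    using measurable_sets_borel[of uminus borel T] T(1) by simp
  define muK where "muK = density mu (indicator K)"
  have sets_muK: "sets muK = sets borel"
    using sets_mu by (simp add: muK_def)
  have "emeasure muK (space muK) = emeasure mu K"
    using K_sets ind_K by (simp add: muK_def emeasure_density nn_integral_indicator)
  then have "finite_measure muK"
    using emeasure_compact_lt_top_if_mconv_le_1[OF sets_mu \<open>compact K\<close> T packing]
    by (intro finite_measureI) simp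
  moreover have "finite_measure M"
    using False space_M by (intro finite_measureI) simp
  ultimately have sigma_finite: "sigma_finite_measure muK" "sigma_finite_measure M"
    by (simp_all add: finite_measure_def)
  have "emeasure mu K = (\<integral>\<^sup>+ x. indicator K x \<partial>mu)"
    using K_sets by simp
  also have "\<dots> \<le> (\<integral>\<^sup>+ x. indicator K x * mconv M (uminus ` T) x \<partial>mu)"
  proof (rule nn_integral_mono)
    fix x show "indicator K x \<le> indicator K x * mconv M (uminus ` T) x"
      using covering[rule_format, of x] by (cases "x \<in> K") auto
  qed
  also have "\<dots> = (\<integral>\<^sup>+ x. mconv M (uminus ` T) x \<partial>muK)"
    unfolding muK_def using sigma_finite(2) sets_M sets_mu uminus_T
    by (intro nn_integral_density[symmetric] ind_K borel_measurable_mconv) auto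
  also have "\<dots> = (\<integral>\<^sup>+ y. mconv muK T y \<partial>M)"
    using sigma_finite sets_muK sets_M T(1) by (rule nn_integral_mconv_uminus_swap)
  also have "\<dots> \<le> (\<integral>\<^sup>+ y. mconv mu T y \<partial>M)"
  proof (rule nn_integral_mono)
    fix y
    have "(\<lambda>x. indicator T (y - x) :: ennreal) \<in> borel_measurable mu"
      using sets_mu T(1) by simp measurable
    then have "mconv muK T y = (\<integral>\<^sup>+ x. indicator K x * indicator T (y - x) \<partial>mu)"
      unfolding mconv_def muK_def by (rule nn_integral_density[OF ind_K])
    also have "\<dots> \<le> mconv mu T y"
      unfolding mconv_def by (intro nn_integral_mono) (simp add: indicator_def)
    finally show "mconv muK T y \<le> mconv mu T y" .
  qed
  also have "\<dots> \<le> (\<integral>\<^sup>+ y. 1 \<partial>M)"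
    using packing by (intro nn_integral_mono) simp
  also have "\<dots> = emeasure M UNIV"
    using space_M by simp
  finally show ?thesis .
qed simp

theorem proposition2p1:
  fixes K T :: "(real ^ 'n) set"
  assumes "compact K" and "compact T" and "interior T \<noteq> {}"
  shows "M_star K T \<le> N_star K (uminus ` T) \<and>
         M_omega_bar K T \<le> N_omega_bar K (uminus ` T) \<and>
         M_omega K T \<le> N_omega K (uminus ` T)"
proof (intro conjI)
  have T_sets: "T \<in> sets borel"
    using \<open>compact T\<close> by (simp add: borel_compact)
  show "M_star K T \<le> N_star K (uminus ` T)"
    unfolding M_star_def N_star_def regular_borel_def
    using emeasure_packing_le_emeasure_covering[OF _ _ \<open>compact K\<close> T_sets \<open>interior T \<noteq> {}\<close>]
    by (intro Sup_least Inf_greatest) auto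
  show "M_omega_bar K T \<le> N_omega_bar K (uminus ` T)"
    unfolding M_omega_bar_def N_omega_bar_def
    using dmass_packing_le_dmass_covering[where A = K]
    by (intro Sup_least Inf_greatest) (auto intro!: ennreal_leI)
  show "M_omega K T \<le> N_omega K (uminus ` T)"
    unfolding M_omega_def N_omega_def
    using dmass_packing_le_dmass_covering[where A = UNIV]
    by (intro Sup_least Inf_greatest) (auto intro!: ennreal_leI)
qed

end
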